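(* Assume (H1)–(H4) as described in the context. Let $\Sigma=\{(x,\varphi(x)):x\in V_1^{c,d}\}$, $\mu(E)=\int_{V_1^{c,d}}\chi_E(x,\varphi(x))\,dx$, and $\mathcal{R}f=\widehat f|_\Sigma$. Let $1\le p,q\le\infty$ and $\frac1{p'}=1-\frac1p$. If there exists a constant $C>0$ such that $\|\mathcal{R}f\|_{L^q(\Sigma,d\mu)}\le C\|f\|_{L^p(\mathbb{R}^4)}$ for all $f\in\mathcal{S}(\mathbb{R}^4)$, then $\frac1q\ge\frac{\alpha_1+\alpha_2+2m}{\alpha_1+\alpha_2}\cdot\frac1{p'}$.
   Context: Fix $\alpha_1,\alpha_2>0$ with $\alpha_1\neq\alpha_2$. For $t>0$ and $x=(x_1,x_2)\in\mathbb{R}^2$ put $t\bullet x=(t^{\alpha_1}x_1,t^{\alpha_2}x_2)$. For reals $a<b$ let $V^{a,b}=\{t\bullet(1,s): a<s<b,\ t>0\}$, and for $a<c<d<b$ let $V^{c,d}=\{t\bullet(1,s):c<s<d,\ t>0\}$ and $V_1^{c,d}=\{t\bullet(1,s): c<s<d,\ 0<t<1\}$. Let $\varphi=(\varphi_1,\varphi_2):V^{a,b}\to\mathbb{R}^2$. For $x\in V^{a,b}$ let $\varphi_j''(x)$ be the Hessian of $\varphi_j$ at $x$ and $Q_x(\zeta)=\det(\zeta_1\varphi_1''(x)+\zeta_2\varphi_2''(x))$. A point $x$ is elliptic for $\varphi$ if $\min_{\zeta\in S^1}|Q_x(\zeta)|>0$. Assumptions: (H1) $\varphi$ is real analytic on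 $V^{a,b}$. (H2) For some $m\ge 3(\alpha_1+\alpha_2)$, $\varphi(t\bullet x)=t^m\varphi(x)$ for all $x\in V^{a,b}$, $t>0$. (H3) $a<c<d<b$ and $\sigma\in[c,d]$ are such that the set of nonelliptic points of $\varphi$ in $\overline{V^{c,d}}\setminus\{\mathbf 0\}$ is exactly $\{t\bullet(1,\sigma):t>0\}$. (H4) With $\beta=2(m-\alpha_1-\alpha_2)$, there are positive integers $n_1,n_2$ and constants $D,\delta>0$ such that: if $\sigma\in(c,d]$ then $\min_{\zeta\in S^1}|Q_{t\bullet(1,s)}(\zeta)|\ge D t^\beta|s-\sigma|^{n_1}$ for $s\in(\sigma-\delta,\sigma)$, $t>0$; if $\sigma\in[c,d)$ then the same holds with $n_2$ for $s\in(\sigma,\sigma+\delta)$, $t>0$; and $\max\{n_1,n_2\}<\frac{2m}{\alpha_1+\alpha_2}-3$. $L^q(\Sigma,d\mu)$ has norm $\|g\|_q^q=\int_{V_1^{c,d}}|g(x,\varphi(x))|^q dx$. *)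

theory Defs
  imports "HOL-Analysis.Analysis"
begin

text \<open>Points of R^2 are pairs of reals; points of R^4 = R^2 x R^2 are pairs of such pairs
 (Euclidean norm, standard inner product and Lebesgue measure lborel).\<close>

definition dil :: "real \<Rightarrow> real \<Rightarrow> real \<Rightarrow> real \<times> real \<Rightarrow> real \<times> real" where
  "dil a1 a2 t x = (t powr a1 * fst x, t powr a2 * snd x)"

definition Vset :: "real \<Rightarrow> real \<Rightarrow> real \<Rightarrow> real \<Rightarrow> (real \<times> real) set" where
  "Vset a1 a2 a b = {dil a1 a2 t (1, s) | t s. 0 < t \<and> a < s \<and> s < b}"

definition V1set :: "real \<Rightarrow> real \<Rightarrow> real \<Rightarrow> real \<Rightarrow> (real \<times> real) set" where
  "V1set a1 a2 c d = {dil a1 a2 t (1, s) | t s. 0 < t \<and> t < 1 \<and> c < s \<and> s < d}"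

text \<open>Real analyticity on a set: locally a (absolutely) convergent double power series.\<close>
definition real_analytic_on2 :: "(real \<times> real \<Rightarrow> real) \<Rightarrow> (real \<times> real) set \<Rightarrow> bool" where
  "real_analytic_on2 f S \<longleftrightarrow>
     (\<forall>x0\<in>S. \<exists>r>0. \<exists>c :: nat \<Rightarrow> nat \<Rightarrow> real. \<forall>x\<in>ball x0 r \<inter> S.
        ((\<lambda>(i, j). c i j * (fst x - fst x0) ^ i * (snd x - snd x0) ^ j) has_sum f x) UNIV)"

definition pd1 :: "(real \<times> real \<Rightarrow> real) \<Rightarrow> real \<times> real \<Rightarrow> real" where
  "pd1 f x = deriv (\<lambda>u. f (u, snd x)) (fst x)"

definition pd2 :: "(real \<times> real \<Rightarrow> real) \<Rightarrow> real \<times> real \<Rightarrow> real" where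
  "pd2 f x = deriv (\<lambda>u. f (fst x, u)) (snd x)"

text \<open>Q_x(zeta) = det(zeta_1 phi_1''(x) + zeta_2 phi_2''(x)) for the 2x2 Hessians.\<close>
definition Qform :: "(real \<times> real \<Rightarrow> real \<times> real) \<Rightarrow> real \<times> real \<Rightarrow> real \<times> real \<Rightarrow> real" where
  "Qform \<phi> x \<zeta> =
     (let f1 = (\<lambda>y. fst (\<phi> y)); f2 = (\<lambda>y. snd (\<phi> y));
          A11 = fst \<zeta> * pd1 (pd1 f1) x + snd \<zeta> * pd1 (pd1 f2) x;
          A12 = fst \<zeta> * pd2 (pd1 f1) x + snd \<zeta> * pd2 (pd1 f2) x;
          A21 = fst \<zeta> * pd1 (pd2 f1) x + snd \<zeta> * pd1 (pd2 f2) x;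
          A22 = fst \<zeta> * pd2 (pd2 f1) x + snd \<zeta> * pd2 (pd2 f2) x
      in A11 * A22 - A12 * A21)"

definition minQ :: "(real \<times> real \<Rightarrow> real \<times> real) \<Rightarrow> real \<times> real \<Rightarrow> real" where
  "minQ \<phi> x = (INF \<zeta>\<in>sphere (0 :: real \<times> real) 1. \<bar>Qform \<phi> x \<zeta>\<bar>)"

definition elliptic :: "(real \<times> real \<Rightarrow> real \<times> real) \<Rightarrow> real \<times> real \<Rightarrow> bool" where
  "elliptic \<phi> x \<longleftrightarrow> minQ \<phi> x > 0"

type_synonym R4 = "(real \<times> real) \<times> (real \<times> real)"

fun iter_dd :: "(R4 \<Rightarrow> complex) \<Rightarrow> R4 list \<Rightarrow> R4 \<Rightarrow> complex" where
  "iter_dd f [] = f"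
| "iter_dd f (v # vs) = (\<lambda>x. frechet_derivative (iter_dd f vs) (at x) v)"

definition schwartz :: "(R4 \<Rightarrow> complex) \<Rightarrow> bool" where
  "schwartz f \<longleftrightarrow>
     (\<forall>vs. \<forall>x. iter_dd f vs differentiable (at x)) \<and>
     (\<forall>vs. \<forall>n::nat. \<exists>C. \<forall>x. norm x ^ n * norm (iter_dd f vs x) \<le> C)"

definition fourier :: "(R4 \<Rightarrow> complex) \<Rightarrow> R4 \<Rightarrow> complex" where
  "fourier f \<xi> = (LINT x|lborel. f x * cis (- 2 * pi * (x \<bullet> \<xi>)))"

text \<open>L^p norm, 1 <= p <= infinity (p = top means the essential supremum).\<close>
definition Lp_norm :: "'a measure \<Rightarrow> ennreal \<Rightarrow> ('a \<Rightarrow> complex) \<Rightarrow> ennreal" where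
  "Lp_norm M p g =
     (if p = top then (INF C\<in>{C::ennreal. AE x in M. ennreal (norm (g x)) \<le> C}. C)
      else (let I = (\<integral>\<^sup>+ x. ennreal (norm (g x) powr enn2real p) \<partial>M)
            in if I = top then top else ennreal (enn2real I powr (1 / enn2real p))))"

end

theory Submission
  imports Defs "HOL-Probability.Probability"
begin

(* Knapp's example. For 0 < t < 1 let f be the Gaussian on R^4 with widths 1/(k t^a1),
   1/(k t^a2), 1/(k t^m), 1/(k t^m) in the four coordinates (a1, a2 for alpha1, alpha2), and
   put S = a1 + a2 + 2m. The L^p norm of f is a constant times t^(-S/p) and its integral is a
   constant times t^(-S). Near some point x0 of V1 the map phi is bounded, being analytic, so
   by the homogeneity phi(t.x) = t^m phi(x) the phase of the Fourier integral of f at (y, phi y)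
   stays small when y lies in the dilated box t.B around t.x0, and there the Fourier transform
   is at least half the integral of f. As t.B has measure comparable to t^(a1+a2), the
   restriction estimate gives t^(-S + (a1+a2)/q) <= C t^(-S/p) for all small t, which forces
   -S/p <= -S + (a1+a2)/q. *)

section \<open>Polynomial growth and Schwartz functions\<close>

lemma real_polynomial_function_has_derivative:
  assumes "real_polynomial_function p"
  shows "\<exists>p'. (\<forall>x. (p has_derivative p' x) (at x)) \<and> (\<forall>v. real_polynomial_function (\<lambda>x. p' x v))"
  using assms
proof induction
  case (linear f)
  then show ?case
    by (intro exI[of _ "\<lambda>x. f"]) (auto intro: bounded_linear_imp_has_derivative)
next
  case (const c)
  show ?case by (intro exI[of _ "\<lambda>x v. 0"]) auto
next
  case (add f g)
  then obtain f' g' where "\<forall>x. (f has_derivative f' x) (at x)" "\<forall>v. real_polynomial_function (\<lambda>x. f' x v)"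
    and "\<forall>x. (g has_derivative g' x) (at x)" "\<forall>v. real_polynomial_function (\<lambda>x. g' x v)"
    by blast
  then show ?case
    by (intro exI[of _ "\<lambda>x v. f' x v + g' x v"]) (auto intro: has_derivative_add)
next
  case (mult f g)
  then obtain f' g' where "\<forall>x. (f has_derivative f' x) (at x)" "\<forall>v. real_polynomial_function (\<lambda>x. f' x v)"
    and "\<forall>x. (g has_derivative g' x) (at x)" "\<forall>v. real_polynomial_function (\<lambda>x. g' x v)"
    by blast
  moreover have "real_polynomial_function (\<lambda>x. f x * g' x v + f' x v * g x)" for v
    using mult.hyps \<open>\<forall>v. real_polynomial_function (\<lambda>x. g' x v)\<close>
      \<open>\<forall>v. real_polynomial_function (\<lambda>x. f' x v)\<close>
    by (intro real_polynomial_function.intros(3,4)) simp_all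
  ultimately show ?case
    by (intro exI[of _ "\<lambda>x v. f x * g' x v + f' x v * g x"]) (blast intro: has_derivative_mult)
qed

lemma real_polynomial_function_polynomial_growth:
  assumes "real_polynomial_function p"
  shows "\<exists>C N. 0 \<le> C \<and> (\<forall>z. \<bar>p z\<bar> \<le> C * (1 + norm z) ^ N)"
  using assms
proof induction
  case (linear f)
  then obtain K where "\<forall>z. norm (f z) \<le> norm z * K"
    using bounded_linear.bounded by blast
  then have "\<bar>f z\<bar> \<le> \<bar>K\<bar> * (1 + norm z) ^ 1" for z
    by (smt (verit, best) mult.commute mult_mono norm_ge_zero power_one_right real_norm_def)
  then show ?case by (intro exI[of _ "\<bar>K\<bar>"] exI[of _ 1]) simp
next
  case (const c)
  show ?case by (intro exI[of _ "\<bar>c\<bar>"] exI[of _ 0]) simp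
next
  case (add f g)
  then obtain C1 N1 C2 N2 where "0 \<le> C1" and f: "\<forall>z. \<bar>f z\<bar> \<le> C1 * (1 + norm z) ^ N1"
    and "0 \<le> C2" and g: "\<forall>z. \<bar>g z\<bar> \<le> C2 * (1 + norm z) ^ N2" by blast
  have "\<bar>f z + g z\<bar> \<le> (C1 + C2) * (1 + norm z) ^ (N1 + N2)" for z
  proof -
    have "(1 + norm z) ^ N1 \<le> (1 + norm z) ^ (N1 + N2)" "(1 + norm z) ^ N2 \<le> (1 + norm z) ^ (N1 + N2)"
      by (auto intro: power_increasing)
    then show ?thesis
      using f g \<open>0 \<le> C1\<close> \<open>0 \<le> C2\<close> by (smt (verit, best) distrib_right mult_left_mono)
  qed
  with \<open>0 \<le> C1\<close> \<open>0 \<le> C2\<close> show ?case by (intro exI[of _ "C1 + C2"] exI[of _ "N1 + N2"]) simp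
next
  case (mult f g)
  then obtain C1 N1 C2 N2 where "0 \<le> C1" and f: "\<forall>z. \<bar>f z\<bar> \<le> C1 * (1 + norm z) ^ N1"
    and "0 \<le> C2" and g: "\<forall>z. \<bar>g z\<bar> \<le> C2 * (1 + norm z) ^ N2" by blast
  have "\<bar>f z * g z\<bar> \<le> (C1 * (1 + norm z) ^ N1) * (C2 * (1 + norm z) ^ N2)" for z
    unfolding abs_mult using f g \<open>0 \<le> C1\<close> by (intro mult_mono) auto
  then have "\<bar>f z * g z\<bar> \<le> (C1 * C2) * (1 + norm z) ^ (N1 + N2)" for z
    by (simp add: power_add mult_ac)
  with \<open>0 \<le> C1\<close> \<open>0 \<le> C2\<close> show ?case by (intro exI[of _ "C1 * C2"] exI[of _ "N1 + N2"]) simp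
qed

lemma polynomial_times_gaussian_le:
  fixes r lam :: real
  assumes "0 \<le> r" "0 < lam"
  shows "(1 + r) ^ K * exp (- lam * r\<^sup>2) \<le> exp (real K ^ 2 / (4 * lam))"
proof -
  have "(1 + r) ^ K \<le> exp r ^ K"
    using assms by (intro power_mono) (auto simp: exp_ge_add_one_self add.commute)
  then have "(1 + r) ^ K * exp (- lam * r\<^sup>2) \<le> exp r ^ K * exp (- lam * r\<^sup>2)"
    by (intro mult_right_mono) auto
  also have "\<dots> = exp (real K * r - lam * r\<^sup>2)"
    by (simp add: exp_of_nat_mult exp_diff exp_minus divide_inverse)
  also have "real K * r - lam * r\<^sup>2 \<le> real K ^ 2 / (4 * lam)"
    using assms zero_le_power2[of "2 * lam * r - real K"] by (simp add: field_simps power2_eq_square)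
  finally show ?thesis by simp
qed

lemma has_derivative_polynomial_times_exp:
  assumes Q: "real_polynomial_function Q" and p: "real_polynomial_function p"
  shows "\<exists>p'. (\<forall>v. real_polynomial_function (\<lambda>x. p' x v)) \<and>
    (\<forall>x. ((\<lambda>z. complex_of_real (p z * exp (- Q z))) has_derivative
           (\<lambda>v. complex_of_real (p' x v * exp (- Q x)))) (at x))"
proof -
  obtain dp where dp: "\<forall>x. (p has_derivative dp x) (at x)" "\<forall>v. real_polynomial_function (\<lambda>x. dp x v)"
    using real_polynomial_function_has_derivative[OF p] by blast
  obtain dQ where dQ: "\<forall>x. (Q has_derivative dQ x) (at x)" "\<forall>v. real_polynomial_function (\<lambda>x. dQ x v)"
    using real_polynomial_function_has_derivative[OF Q] by blast
  have "((\<lambda>z. complex_of_real (p z * exp (- Q z))) has_derivative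
      (\<lambda>v. complex_of_real ((dp x v - p x * dQ x v) * exp (- Q x)))) (at x)" for x
    by (rule derivative_eq_intros dp(1)[rule_format] dQ(1)[rule_format] refl)+
      (simp add: fun_eq_iff algebra_simps)
  moreover have "real_polynomial_function (\<lambda>x. dp x v - p x * dQ x v)" for v
    using p dp(2) dQ(2) by (intro real_polynomial_function_diff real_polynomial_function.intros(4)) simp_all
  ultimately show ?thesis by (intro exI[of _ "\<lambda>x v. dp x v - p x * dQ x v"]) simp
qed

lemma iter_dd_polynomial_times_exp:
  assumes Q: "real_polynomial_function Q" and p: "real_polynomial_function p"
  shows "\<exists>r. real_polynomial_function r \<and>
    iter_dd (\<lambda>z. complex_of_real (p z * exp (- Q z))) vs = (\<lambda>z. complex_of_real (r z * exp (- Q z)))"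
proof (induction vs)
  case Nil
  show ?case using p by auto
next
  case (Cons v vs)
  then obtain r where r: "real_polynomial_function r"
    and "iter_dd (\<lambda>z. complex_of_real (p z * exp (- Q z))) vs = (\<lambda>z. complex_of_real (r z * exp (- Q z)))"
    by blast
  moreover obtain r' where "\<And>v. real_polynomial_function (\<lambda>x. r' x v)"
    and r': "\<forall>x. ((\<lambda>z. complex_of_real (r z * exp (- Q z))) has_derivative
           (\<lambda>v. complex_of_real (r' x v * exp (- Q x)))) (at x)"
    using has_derivative_polynomial_times_exp[OF Q r] by blast
  moreover have "frechet_derivative (\<lambda>z. complex_of_real (r z * exp (- Q z))) (at x)
      = (\<lambda>v. complex_of_real (r' x v * exp (- Q x)))" for x
    using frechet_derivative_at[OF r'[rule_format, of x]] by simp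
  ultimately show ?case by (intro exI[of _ "\<lambda>x. r' x v"]) simp
qed

lemma schwartz_exp_neg_polynomial:
  assumes Q: "real_polynomial_function Q" and lam: "0 < lam" and Q_ge: "\<And>z. lam * (norm z)\<^sup>2 \<le> Q z"
  shows "schwartz (\<lambda>z. complex_of_real (exp (- Q z)))"
  unfolding schwartz_def
proof (intro conjI allI)
  fix vs and n :: nat
  obtain p where p: "real_polynomial_function p"
    and dd: "iter_dd (\<lambda>z. complex_of_real (exp (- Q z))) vs = (\<lambda>z. complex_of_real (p z * exp (- Q z)))"
    using iter_dd_polynomial_times_exp[OF Q, of "\<lambda>_. 1"] by auto
  show "iter_dd (\<lambda>z. complex_of_real (exp (- Q z))) vs differentiable (at x)" for x
    using has_derivative_polynomial_times_exp[OF Q p] unfolding dd differentiable_def by blast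
  obtain C N where C0: "0 \<le> C" and C: "\<And>z. \<bar>p z\<bar> \<le> C * (1 + norm z) ^ N"
    using real_polynomial_function_polynomial_growth[OF p] by blast
  have "norm z ^ n * norm (iter_dd (\<lambda>z. complex_of_real (exp (- Q z))) vs z)
      \<le> C * exp (real (n + N) ^ 2 / (4 * lam))" for z
  proof -
    have "norm z ^ n * norm (iter_dd (\<lambda>z. complex_of_real (exp (- Q z))) vs z)
        = norm z ^ n * (\<bar>p z\<bar> * exp (- Q z))"
      by (simp add: dd norm_mult)
    also have "\<dots> \<le> (1 + norm z) ^ n * (C * (1 + norm z) ^ N * exp (- lam * (norm z)\<^sup>2))"
      using C[of z] C0 Q_ge[of z] by (intro mult_mono power_mono) simp_all
    also have "\<dots> = C * ((1 + norm z) ^ (n + N) * exp (- lam * (norm z)\<^sup>2))"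
      by (simp add: power_add algebra_simps)
    also have "\<dots> \<le> C * exp (real (n + N) ^ 2 / (4 * lam))"
      using C0 lam by (intro mult_left_mono polynomial_times_gaussian_le) auto
    finally show ?thesis .
  qed
  then show "\<exists>B. \<forall>z. norm z ^ n * norm (iter_dd (\<lambda>z. complex_of_real (exp (- Q z))) vs z) \<le> B"
    by blast
qed

section \<open>Gaussians on R^4\<close>

definition gauss :: "real \<Rightarrow> real \<Rightarrow> real" where
  "gauss s x = exp (- x\<^sup>2 / (2 * s\<^sup>2))"

lemma gauss_pos: "0 < gauss s x"
  by (simp add: gauss_def)

lemma gauss_le_1: "gauss s x \<le> 1"
  by (simp add: gauss_def)

lemma gauss_powr:
  assumes "0 < s" "0 < P"
  shows "gauss s x powr P = gauss (s / sqrt P) x"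
  using assms by (simp add: gauss_def exp_powr_real power_divide field_simps)

lemma has_bochner_integral_gauss_moment:
  assumes "0 < s"
  shows "has_bochner_integral lborel (\<lambda>x. gauss s x * x ^ (2 * k))
    (sqrt (2 * pi) * s * (fact (2 * k) / ((2 / s\<^sup>2) ^ k * fact k)))"
proof -
  have "(\<lambda>x. gauss s x * x ^ (2 * k)) = (\<lambda>x. sqrt (2 * pi) * s * (normal_density 0 s x * (x - 0) ^ (2 * k)))"
    using assms by (simp add: fun_eq_iff normal_density_def gauss_def real_sqrt_mult)
  then show ?thesis
    using has_bochner_integral_mult_right[OF normal_moment_even[where k=k and \<mu>=0 and \<sigma>=s, OF assms],
        of "sqrt (2 * pi) * s"] by simp
qed

lemma has_bochner_integral_gauss:
  "0 < s \<Longrightarrow> has_bochner_integral lborel (gauss s) (sqrt (2 * pi) * s)"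
  using has_bochner_integral_gauss_moment[of s 0] by simp

lemma has_bochner_integral_gauss_moment_2:
  "0 < s \<Longrightarrow> has_bochner_integral lborel (\<lambda>x. gauss s x * x\<^sup>2) (sqrt (2 * pi) * s * s\<^sup>2)"
  using has_bochner_integral_gauss_moment[of s 1] by simp

lemma has_bochner_integral_lborel_product:
  fixes f :: "'a::euclidean_space \<Rightarrow> real" and g :: "'b::euclidean_space \<Rightarrow> real"
  assumes f: "has_bochner_integral lborel f I" and g: "has_bochner_integral lborel g J"
    and f_nonneg: "\<And>x. 0 \<le> f x" and g_nonneg: "\<And>y. 0 \<le> g y"
  shows "has_bochner_integral lborel (\<lambda>z. f (fst z) * g (snd z)) (I * J)"
proof -
  have [measurable]: "f \<in> borel_measurable borel" "g \<in> borel_measurable borel"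
    using f g by (auto dest: borel_measurable_has_bochner_integral)
  have I: "(\<integral>\<^sup>+ x. ennreal (f x) \<partial>lborel) = ennreal I" and "0 \<le> I"
    using f f_nonneg by (auto simp: has_bochner_integral_iff nn_integral_eq_integral)
  have J: "(\<integral>\<^sup>+ y. ennreal (g y) \<partial>lborel) = ennreal J" and "0 \<le> J"
    using g g_nonneg by (auto simp: has_bochner_integral_iff nn_integral_eq_integral)
  have "(\<integral>\<^sup>+ z. ennreal (f (fst z) * g (snd z)) \<partial>(lborel :: ('a \<times> 'b) measure))
      = (\<integral>\<^sup>+ x. \<integral>\<^sup>+ y. ennreal (f x) * ennreal (g y) \<partial>lborel \<partial>lborel)"
    using f_nonneg g_nonneg
    by (simp add: lborel_prod[symmetric] lborel.nn_integral_fst[symmetric] ennreal_mult)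
  also have "\<dots> = ennreal (I * J)"
    using \<open>0 \<le> I\<close> \<open>0 \<le> J\<close> by (simp add: nn_integral_cmult nn_integral_multc I J ennreal_mult)
  finally show ?thesis
    using f_nonneg g_nonneg \<open>0 \<le> I\<close> \<open>0 \<le> J\<close>
    by (intro has_bochner_integral_nn_integral) (auto simp: borel_prod[symmetric])
qed

lemma has_bochner_integral_R4_product:
  fixes f1 f2 f3 f4 :: "real \<Rightarrow> real"
  assumes "has_bochner_integral lborel f1 I1" "has_bochner_integral lborel f2 I2"
    "has_bochner_integral lborel f3 I3" "has_bochner_integral lborel f4 I4"
    and "\<And>x. 0 \<le> f1 x" "\<And>x. 0 \<le> f2 x" "\<And>x. 0 \<le> f3 x" "\<And>x. 0 \<le> f4 x"
  shows "has_bochner_integral lborel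
    (\<lambda>z::R4. f1 (fst (fst z)) * f2 (snd (fst z)) * (f3 (fst (snd z)) * f4 (snd (snd z))))
    (I1 * I2 * (I3 * I4))"
proof -
  have "has_bochner_integral lborel (\<lambda>x. f1 (fst x) * f2 (snd x)) (I1 * I2)"
    "has_bochner_integral lborel (\<lambda>y. f3 (fst y) * f4 (snd y)) (I3 * I4)"
    using assms by (auto intro: has_bochner_integral_lborel_product)
  then show ?thesis
    using has_bochner_integral_lborel_product[of "\<lambda>x. f1 (fst x) * f2 (snd x)" _ "\<lambda>y. f3 (fst y) * f4 (snd y)"]
      assms by simp
qed

lemma norm_R4_power2:
  "(norm (z :: R4))\<^sup>2 = (fst (fst z))\<^sup>2 + (snd (fst z))\<^sup>2 + (fst (snd z))\<^sup>2 + (snd (snd z))\<^sup>2"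
  unfolding power2_norm_eq_inner inner_prod_def by (simp add: power2_eq_square)

definition gauss4 :: "real \<Rightarrow> real \<Rightarrow> real \<Rightarrow> real \<Rightarrow> R4 \<Rightarrow> real" where
  "gauss4 s1 s2 s3 s4 z =
     gauss s1 (fst (fst z)) * gauss s2 (snd (fst z)) * (gauss s3 (fst (snd z)) * gauss s4 (snd (snd z)))"

lemma gauss4_pos: "0 < gauss4 s1 s2 s3 s4 z"
  by (simp add: gauss4_def gauss_pos)

lemma gauss4_le_1: "gauss4 s1 s2 s3 s4 z \<le> 1"
  unfolding gauss4_def by (intro mult_le_one) (auto simp: gauss_le_1 gauss_pos less_imp_le)

lemma gauss4_powr:
  assumes "0 < s1" "0 < s2" "0 < s3" "0 < s4" "0 < P"
  shows "gauss4 s1 s2 s3 s4 z powr P = gauss4 (s1 / sqrt P) (s2 / sqrt P) (s3 / sqrt P) (s4 / sqrt P) z"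
  using assms by (simp add: gauss4_def powr_mult gauss_pos less_imp_le gauss_powr)

lemma has_bochner_integral_gauss4:
  assumes "0 < s1" "0 < s2" "0 < s3" "0 < s4"
  shows "has_bochner_integral lborel (gauss4 s1 s2 s3 s4) ((2 * pi)\<^sup>2 * (s1 * s2 * s3 * s4))"
proof -
  have "has_bochner_integral lborel (gauss4 s1 s2 s3 s4)
      (sqrt (2 * pi) * s1 * (sqrt (2 * pi) * s2) * (sqrt (2 * pi) * s3 * (sqrt (2 * pi) * s4)))"
    unfolding gauss4_def[abs_def]
    by (intro has_bochner_integral_R4_product has_bochner_integral_gauss assms less_imp_le gauss_pos)
  moreover have "sqrt (2 * pi) * s1 * (sqrt (2 * pi) * s2) * (sqrt (2 * pi) * s3 * (sqrt (2 * pi) * s4))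
      = (2 * pi)\<^sup>2 * (s1 * s2 * s3 * s4)"
    by (simp add: power2_eq_square algebra_simps)
  ultimately show ?thesis by simp
qed

lemma schwartz_gauss4:
  assumes "0 < s1" "0 < s2" "0 < s3" "0 < s4"
  shows "schwartz (\<lambda>z. complex_of_real (gauss4 s1 s2 s3 s4 z))"
proof -
  define w where "w s = 1 / (2 * s\<^sup>2)" for s :: real
  define Q where "Q z = w s1 * (fst (fst z))\<^sup>2 + w s2 * (snd (fst z))\<^sup>2
    + w s3 * (fst (snd z))\<^sup>2 + w s4 * (snd (snd z))\<^sup>2" for z :: R4
  define lam where "lam = min (min (w s1) (w s2)) (min (w s3) (w s4))"
  have "real_polynomial_function (\<lambda>z::R4. fst (fst z))" "real_polynomial_function (\<lambda>z::R4. snd (fst z))"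
    "real_polynomial_function (\<lambda>z::R4. fst (snd z))" "real_polynomial_function (\<lambda>z::R4. snd (snd z))"
    by (auto intro!: real_polynomial_function.intros(1) bounded_linear_intros)
  then have "real_polynomial_function Q"
    unfolding Q_def power2_eq_square by (intro real_polynomial_function.intros(2-4))
  moreover have "0 < lam" using assms by (simp add: lam_def w_def)
  moreover have "lam * (norm z)\<^sup>2 \<le> Q z" for z
  proof -
    have "lam * (norm z)\<^sup>2
        = lam * (fst (fst z))\<^sup>2 + lam * (snd (fst z))\<^sup>2 + lam * (fst (snd z))\<^sup>2 + lam * (snd (snd z))\<^sup>2"
      by (simp add: norm_R4_power2 algebra_simps)
    also have "\<dots> \<le> Q z"
      unfolding Q_def by (intro add_mono mult_right_mono) (auto simp: lam_def)
    finally show ?thesis .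
  qed
  moreover have "gauss4 s1 s2 s3 s4 z = exp (- Q z)" for z
    by (simp add: gauss4_def gauss_def Q_def w_def exp_add[symmetric] exp_minus[symmetric] field_simps)
  ultimately show ?thesis
    using schwartz_exp_neg_polynomial by presburger
qed

lemma cos_ge_1_minus_square_half: "1 - x\<^sup>2 / 2 \<le> cos (x :: real)"
proof -
  have "cos x = 1 - 2 * (sin (x / 2))\<^sup>2"
    using cos_double_sin[of "x / 2"] by simp
  moreover have "(sin (x / 2))\<^sup>2 \<le> (x / 2)\<^sup>2"
    by (metis abs_le_square_iff abs_sin_x_le_abs_x)
  ultimately show ?thesis by (simp add: power_divide)
qed

lemma square_sum4_le: "(a + b + c + d :: real)\<^sup>2 \<le> 4 * (a\<^sup>2 + b\<^sup>2 + c\<^sup>2 + d\<^sup>2)"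
proof -
  have "4 * (a\<^sup>2 + b\<^sup>2 + c\<^sup>2 + d\<^sup>2) - (a + b + c + d)\<^sup>2 =
      (a - b)\<^sup>2 + (a - c)\<^sup>2 + (a - d)\<^sup>2 + (b - c)\<^sup>2 + (b - d)\<^sup>2 + (c - d)\<^sup>2"
    by (simp add: power2_eq_square algebra_simps)
  then show ?thesis
    by (smt (verit) zero_le_power2)
qed

definition norm2_coordwise_mult :: "R4 \<Rightarrow> R4 \<Rightarrow> real" where
  "norm2_coordwise_mult a z = (fst (fst a) * fst (fst z))\<^sup>2 + (snd (fst a) * snd (fst z))\<^sup>2
     + (fst (snd a) * fst (snd z))\<^sup>2 + (snd (snd a) * snd (snd z))\<^sup>2"

lemma cos_two_pi_inner_ge:
  fixes z \<xi> :: R4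
  shows "1 - 8 * pi\<^sup>2 * norm2_coordwise_mult \<xi> z \<le> cos (2 * pi * (z \<bullet> \<xi>))"
proof -
  have "(2 * pi * (z \<bullet> \<xi>))\<^sup>2 = 4 * pi\<^sup>2 * (fst (fst \<xi>) * fst (fst z) + snd (fst \<xi>) * snd (fst z)
      + fst (snd \<xi>) * fst (snd z) + snd (snd \<xi>) * snd (snd z))\<^sup>2"
    by (simp add: inner_prod_def power_mult_distrib add.assoc mult.commute)
  also have "\<dots> \<le> 4 * pi\<^sup>2 * (4 * norm2_coordwise_mult \<xi> z)"
    unfolding norm2_coordwise_mult_def by (intro mult_left_mono square_sum4_le) auto
  finally show ?thesis
    using cos_ge_1_minus_square_half[of "2 * pi * (z \<bullet> \<xi>)"] by linarith
qed

lemma has_bochner_integral_gauss4_weighted: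
  fixes \<xi> :: R4
  assumes s: "0 < s1" "0 < s2" "0 < s3" "0 < s4"
  shows "has_bochner_integral lborel (\<lambda>z. gauss4 s1 s2 s3 s4 z * (1 - 8 * pi\<^sup>2 * norm2_coordwise_mult \<xi> z))
    ((2 * pi)\<^sup>2 * (s1 * s2 * s3 * s4) * (1 - 8 * pi\<^sup>2 * norm2_coordwise_mult \<xi> ((s1, s2), (s3, s4))))"
proof -
  define G where "G = gauss4 s1 s2 s3 s4"
  define I where "I = sqrt (2 * pi) * s1 * (sqrt (2 * pi) * s2) * (sqrt (2 * pi) * s3 * (sqrt (2 * pi) * s4))"
  have nonneg: "0 \<le> gauss s x" "0 \<le> gauss s x * x\<^sup>2" for s x
    by (simp_all add: gauss_pos less_imp_le)
  note g = has_bochner_integral_gauss[OF s(1)] has_bochner_integral_gauss[OF s(2)]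
    has_bochner_integral_gauss[OF s(3)] has_bochner_integral_gauss[OF s(4)]
  note m = has_bochner_integral_gauss_moment_2[OF s(1)] has_bochner_integral_gauss_moment_2[OF s(2)]
    has_bochner_integral_gauss_moment_2[OF s(3)] has_bochner_integral_gauss_moment_2[OF s(4)]
  have "has_bochner_integral lborel G I"
    using has_bochner_integral_R4_product[OF g nonneg(1) nonneg(1) nonneg(1) nonneg(1)]
    by (simp add: G_def gauss4_def[abs_def] I_def)
  moreover have "has_bochner_integral lborel (\<lambda>z. G z * (fst (fst z))\<^sup>2) (I * s1\<^sup>2)"
    using has_bochner_integral_R4_product[OF m(1) g(2-4) nonneg(2) nonneg(1) nonneg(1) nonneg(1)]
    by (simp add: G_def gauss4_def I_def mult_ac)
  moreover have "has_bochner_integral lborel (\<lambda>z. G z * (snd (fst z))\<^sup>2) (I * s2\<^sup>2)"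
    using has_bochner_integral_R4_product[OF g(1) m(2) g(3-4) nonneg(1) nonneg(2) nonneg(1) nonneg(1)]
    by (simp add: G_def gauss4_def I_def mult_ac)
  moreover have "has_bochner_integral lborel (\<lambda>z. G z * (fst (snd z))\<^sup>2) (I * s3\<^sup>2)"
    using has_bochner_integral_R4_product[OF g(1-2) m(3) g(4) nonneg(1) nonneg(1) nonneg(2) nonneg(1)]
    by (simp add: G_def gauss4_def I_def mult_ac)
  moreover have "has_bochner_integral lborel (\<lambda>z. G z * (snd (snd z))\<^sup>2) (I * s4\<^sup>2)"
    using has_bochner_integral_R4_product[OF g(1-3) m(4) nonneg(1) nonneg(1) nonneg(1) nonneg(2)]
    by (simp add: G_def gauss4_def I_def mult_ac)
  ultimately have "has_bochner_integral lborel
      (\<lambda>z. G z - 8 * pi\<^sup>2 * ((fst (fst \<xi>))\<^sup>2 * (G z * (fst (fst z))\<^sup>2) + (snd (fst \<xi>))\<^sup>2 * (G z * (snd (fst z))\<^sup>2)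
        + (fst (snd \<xi>))\<^sup>2 * (G z * (fst (snd z))\<^sup>2) + (snd (snd \<xi>))\<^sup>2 * (G z * (snd (snd z))\<^sup>2)))
      (I - 8 * pi\<^sup>2 * ((fst (fst \<xi>))\<^sup>2 * (I * s1\<^sup>2) + (snd (fst \<xi>))\<^sup>2 * (I * s2\<^sup>2)
        + (fst (snd \<xi>))\<^sup>2 * (I * s3\<^sup>2) + (snd (snd \<xi>))\<^sup>2 * (I * s4\<^sup>2)))"
    by (intro has_bochner_integral_diff has_bochner_integral_add has_bochner_integral_mult_right)
  moreover have "I = (2 * pi)\<^sup>2 * (s1 * s2 * s3 * s4)"
    by (simp add: I_def power2_eq_square algebra_simps)
  ultimately show ?thesis
    by (simp add: G_def norm2_coordwise_mult_def power_mult_distrib algebra_simps)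
qed

lemma Re_fourier_of_real:
  fixes G :: "R4 \<Rightarrow> real"
  assumes G: "integrable lborel G"
  shows "integrable lborel (\<lambda>z. G z * cos (2 * pi * (z \<bullet> \<xi>)))"
    and "Re (fourier (\<lambda>z. complex_of_real (G z)) \<xi>) = (\<integral>z. G z * cos (2 * pi * (z \<bullet> \<xi>)) \<partial>lborel)"
proof -
  define F where "F z = complex_of_real (G z) * cis (- 2 * pi * (z \<bullet> \<xi>))" for z
  have "(\<lambda>z::R4. cis (- 2 * pi * (z \<bullet> \<xi>))) \<in> borel_measurable lborel"
    unfolding measurable_lborel2 by (intro borel_measurable_continuous_onI continuous_intros)
  with measurable_compose[OF borel_measurable_integrable[OF G] borel_measurable_of_real]
  have "F \<in> borel_measurable lborel"
    unfolding F_def[abs_def] by (rule borel_measurable_times)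
  moreover have "AE z in lborel. norm (F z) \<le> norm (G z)"
    by (simp add: F_def norm_mult)
  ultimately have F: "integrable lborel F"
    using G by (intro Bochner_Integration.integrable_bound[of _ G F])
  have Re_F: "Re (F z) = G z * cos (2 * pi * (z \<bullet> \<xi>))" for z
    by (simp add: F_def)
  show "integrable lborel (\<lambda>z. G z * cos (2 * pi * (z \<bullet> \<xi>)))"
    using integrable_Re[OF F] unfolding Re_F .
  show "Re (fourier (\<lambda>z. complex_of_real (G z)) \<xi>) = (\<integral>z. G z * cos (2 * pi * (z \<bullet> \<xi>)) \<partial>lborel)"
    using integral_bounded_linear[OF bounded_linear_Re F] unfolding Re_F
    by (simp add: fourier_def F_def[abs_def])
qed

lemma Re_fourier_gauss4_ge:
  fixes \<xi> :: R4
  assumes s: "0 < s1" "0 < s2" "0 < s3" "0 < s4"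
  shows "(2 * pi)\<^sup>2 * (s1 * s2 * s3 * s4) * (1 - 8 * pi\<^sup>2 * norm2_coordwise_mult \<xi> ((s1, s2), (s3, s4)))
    \<le> Re (fourier (\<lambda>z. complex_of_real (gauss4 s1 s2 s3 s4 z)) \<xi>)"
proof -
  note weighted = has_bochner_integral_gauss4_weighted[OF s, of \<xi>]
  then have weighted_int:
    "integrable lborel (\<lambda>z. gauss4 s1 s2 s3 s4 z * (1 - 8 * pi\<^sup>2 * norm2_coordwise_mult \<xi> z))"
    by (simp add: has_bochner_integral_iff)
  have G: "integrable lborel (gauss4 s1 s2 s3 s4)"
    using has_bochner_integral_gauss4[OF s] by (simp add: has_bochner_integral_iff)
  have "gauss4 s1 s2 s3 s4 z * (1 - 8 * pi\<^sup>2 * norm2_coordwise_mult \<xi> z)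
      \<le> gauss4 s1 s2 s3 s4 z * cos (2 * pi * (z \<bullet> \<xi>))" for z
    using gauss4_pos[of s1 s2 s3 s4 z] cos_two_pi_inner_ge[of \<xi> z] by (simp add: mult_left_mono)
  then show ?thesis
    using integral_mono[OF weighted_int Re_fourier_of_real(1)[OF G]]
      has_bochner_integral_integral_eq[OF weighted] Re_fourier_of_real(2)[OF G]
    by simp
qed

lemma Lp_norm_gauss4:
  assumes s: "0 < s1" "0 < s2" "0 < s3" "0 < s4" and P: "0 < P"
  shows "Lp_norm lborel (ennreal P) (\<lambda>z. complex_of_real (gauss4 s1 s2 s3 s4 z))
    = ennreal (((2 * pi)\<^sup>2 * (s1 * s2 * s3 * s4) / P\<^sup>2) powr (1 / P))"
proof -
  have s': "0 < s1 / sqrt P" "0 < s2 / sqrt P" "0 < s3 / sqrt P" "0 < s4 / sqrt P"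
    using s P by auto
  have "(\<integral>\<^sup>+ z. ennreal (norm (complex_of_real (gauss4 s1 s2 s3 s4 z)) powr P) \<partial>lborel)
      = (\<integral>\<^sup>+ z. ennreal (gauss4 (s1 / sqrt P) (s2 / sqrt P) (s3 / sqrt P) (s4 / sqrt P) z) \<partial>lborel)"
    using gauss4_powr[OF s P] gauss4_pos[of s1 s2 s3 s4] by (simp add: less_imp_le)
  also have "\<dots> = ennreal ((2 * pi)\<^sup>2 * (s1 / sqrt P * (s2 / sqrt P) * (s3 / sqrt P) * (s4 / sqrt P)))"
    using has_bochner_integral_gauss4[OF s'] gauss4_pos
    by (subst nn_integral_eq_integral) (auto simp: has_bochner_integral_iff less_imp_le)
  also have "(2 * pi)\<^sup>2 * (s1 / sqrt P * (s2 / sqrt P) * (s3 / sqrt P) * (s4 / sqrt P))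
      = (2 * pi)\<^sup>2 * (s1 * s2 * s3 * s4) / P\<^sup>2"
    using P by (simp add: power2_eq_square field_simps)
  finally show ?thesis
    using s P by (simp add: Lp_norm_def)
qed

lemma Lp_norm_top_gauss4: "Lp_norm lborel top (\<lambda>z. complex_of_real (gauss4 s1 s2 s3 s4 z)) \<le> 1"
proof -
  have "AE z in lborel. ennreal (norm (complex_of_real (gauss4 s1 s2 s3 s4 z))) \<le> 1"
    using gauss4_pos[of s1 s2 s3 s4] gauss4_le_1[of s1 s2 s3 s4] by (simp add: less_imp_le)
  then show ?thesis
    unfolding Lp_norm_def by (auto intro: Inf_lower)
qed

lemma enn2real_divide_ennreal: "0 < P \<Longrightarrow> enn2real (1 / ennreal P) = 1 / P"
  using divide_ennreal[of 1 P] by simp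

lemma Lp_norm_gauss4_le:
  assumes "1 \<le> p"
  obtains K where "0 < K" "\<And>s1 s2 s3 s4. 0 < s1 \<Longrightarrow> 0 < s2 \<Longrightarrow> 0 < s3 \<Longrightarrow> 0 < s4 \<Longrightarrow>
    Lp_norm lborel p (\<lambda>z. complex_of_real (gauss4 s1 s2 s3 s4 z))
      \<le> ennreal (K * (s1 * s2 * s3 * s4) powr enn2real (1 / p))"
proof (cases "p = top")
  case True
  then show ?thesis
    using that[of 1] Lp_norm_top_gauss4 by simp
next
  case False
  then obtain P where p: "p = ennreal P" and "1 \<le> P"
    using assms by (cases p) auto
  then have "enn2real (1 / p) = 1 / P"
    by (simp add: enn2real_divide_ennreal)
  moreover have "((2 * pi)\<^sup>2 * (s1 * s2 * s3 * s4) / P\<^sup>2) powr (1 / P)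
      = ((2 * pi)\<^sup>2 / P\<^sup>2) powr (1 / P) * (s1 * s2 * s3 * s4) powr (1 / P)"
    if "0 < s1" "0 < s2" "0 < s3" "0 < s4" for s1 s2 s3 s4
    using that by (simp add: powr_mult[symmetric])
  ultimately show ?thesis
    using that[of "((2 * pi)\<^sup>2 / P\<^sup>2) powr (1 / P)"] \<open>1 \<le> P\<close> by (simp add: p Lp_norm_gauss4)
qed

section \<open>Lower bounds for L^p norms\<close>

lemma Lp_norm_top_ge:
  assumes R: "R \<in> sets M" "emeasure M R \<noteq> 0" and F_ge: "\<And>y. y \<in> R \<Longrightarrow> c \<le> norm (F y)"
  shows "ennreal c \<le> Lp_norm M top F"
proof -
  have "ennreal c \<le> C" if C: "AE x in M. ennreal (norm (F x)) \<le> C" for C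
  proof (rule ccontr)
    assume c_C: "\<not> ennreal c \<le> C"
    from C have "AE x in M. x \<notin> R"
    proof eventually_elim
      case (elim x)
      show ?case
      proof
        assume "x \<in> R"
        then have "ennreal c \<le> ennreal (norm (F x))"
          using F_ge ennreal_leI by blast
        with elim c_C show False
          using order_trans by blast
      qed
    qed
    moreover have R_space: "{x \<in> space M. \<not> x \<notin> R} = R"
      using sets.sets_into_space[OF R(1)] by auto
    ultimately have "emeasure M R = 0"
      using AE_iff_measurable[OF R(1) R_space] by simp
    with R(2) show False ..
  qed
  then show ?thesis
    unfolding Lp_norm_def by (auto intro: Inf_greatest)
qed
lemma Lp_norm_ge:
  assumes R: "R \<in> sets M" "emeasure M R = ennreal r" "0 \<le> r"
    and Q: "0 < Q" and c: "0 \<le> c" and F_ge: "\<And>y. y \<in> R \<Longrightarrow> c \<le> norm (F y)"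
  shows "ennreal (c * r powr (1 / Q)) \<le> Lp_norm M (ennreal Q) F"
proof -
  define I where "I = (\<integral>\<^sup>+ x. ennreal (norm (F x) powr Q) \<partial>M)"
  have "ennreal (c powr Q) * emeasure M R = (\<integral>\<^sup>+ x. ennreal (c powr Q) * indicator R x \<partial>M)"
    using R(1) by (simp add: nn_integral_cmult_indicator)
  also have "\<dots> \<le> I"
    unfolding I_def using F_ge c Q
    by (intro nn_integral_mono) (auto split: split_indicator intro!: ennreal_leI powr_mono2)
  finally have I_ge: "ennreal (c powr Q * r) \<le> I"
    using c R by (simp add: ennreal_mult)
  show ?thesis
  proof (cases "I = top")
    case False
    then have "c powr Q * r \<le> enn2real I"
      using enn2real_mono[OF I_ge] c R(3) by (simp add: less_top)
    then have "(c powr Q * r) powr (1 / Q) \<le> enn2real I powr (1 / Q)"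
      using c R Q by (intro powr_mono2) auto
    moreover have "(c powr Q * r) powr (1 / Q) = c * r powr (1 / Q)"
      using c R Q by (simp add: powr_mult powr_powr)
    ultimately show ?thesis
      using False Q by (simp add: Lp_norm_def I_def[symmetric] ennreal_leI)
  qed (use Q in \<open>simp add: Lp_norm_def I_def[symmetric]\<close>)
qed

lemma Lp_norm_ge_inverse_exponent:
  assumes R: "R \<in> sets M" "emeasure M R = ennreal r" "0 < r"
    and q: "1 \<le> q" and c: "0 \<le> c" and F_ge: "\<And>y. y \<in> R \<Longrightarrow> c \<le> norm (F y)"
  shows "ennreal (c * r powr enn2real (1 / q)) \<le> Lp_norm M q F"
proof (cases q)
  case (real Q)
  then show ?thesis
    using Lp_norm_ge[OF R(1,2) _ _ c F_ge, of Q] R(3) q by (simp add: enn2real_divide_ennreal)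
next
  case top
  then show ?thesis
    using Lp_norm_top_ge[OF R(1) _ F_ge] R(2,3) by simp
qed

section \<open>Local boundedness and the cone V1\<close>

lemma dist_le_sum_abs_coords:
  fixes x y :: "real \<times> real"
  shows "dist x y \<le> \<bar>fst x - fst y\<bar> + \<bar>snd x - snd y\<bar>"
  using sqrt_sum_squares_le_sum_abs[of "fst x - fst y" "snd x - snd y"]
  by (cases x, cases y) (simp add: dist_Pair_Pair dist_real_def)

lemma abs_coords_le_dist:
  fixes x y :: "real \<times> real"
  shows "\<bar>fst x - fst y\<bar> \<le> dist x y" "\<bar>snd x - snd y\<bar> \<le> dist x y"
  using dist_fst_le[of x y] dist_snd_le[of x y] by (simp_all add: dist_real_def)

lemma rectangle_subset_cball:
  fixes x0 :: "real \<times> real"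
  shows "{fst x0 - h..fst x0 + h} \<times> {snd x0 - h..snd x0 + h} \<subseteq> cball x0 (2 * h)"
proof
  fix x assume "x \<in> {fst x0 - h..fst x0 + h} \<times> {snd x0 - h..snd x0 + h}"
  then have "\<bar>fst x0 - fst x\<bar> + \<bar>snd x0 - snd x\<bar> \<le> 2 * h"
    by (auto simp: abs_le_iff)
  then show "x \<in> cball x0 (2 * h)"
    using dist_le_sum_abs_coords[of x0 x] by simp
qed

lemma abs_has_sum_le_infsum_abs:
  fixes g b :: "'a \<Rightarrow> real"
  assumes "(g has_sum y) A" "(\<lambda>i. \<bar>b i\<bar>) summable_on A" "\<And>i. i \<in> A \<Longrightarrow> \<bar>g i\<bar> \<le> \<bar>b i\<bar>"
  shows "\<bar>y\<bar> \<le> infsum (\<lambda>i. \<bar>b i\<bar>) A"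
proof -
  have abs_g: "(\<lambda>i. \<bar>g i\<bar>) summable_on A"
    using assms(1) summable_on_iff_abs_summable_on_real has_sum_imp_summable by fastforce
  have "\<bar>y\<bar> = norm (infsum g A)"
    using assms(1) by (simp add: infsumI)
  also have "\<dots> \<le> infsum (\<lambda>i. \<bar>g i\<bar>) A"
    using norm_infsum_bound[of g A] abs_g by simp
  also have "\<dots> \<le> infsum (\<lambda>i. \<bar>b i\<bar>) A"
    using abs_g assms(2,3) by (rule infsum_mono)
  finally show ?thesis .
qed

lemma real_analytic_on2_locally_bounded:
  assumes f: "real_analytic_on2 f S" and x0: "x0 \<in> interior S"
  obtains e M where "0 < e" "\<And>x. x \<in> cball x0 e \<Longrightarrow> \<bar>f x\<bar> \<le> M"
proof -
  obtain r and a :: "nat \<Rightarrow> nat \<Rightarrow> real" where "0 < r" and series: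
    "\<And>x. x \<in> ball x0 r \<inter> S \<Longrightarrow>
      ((\<lambda>(i, j). a i j * (fst x - fst x0) ^ i * (snd x - snd x0) ^ j) has_sum f x) UNIV"
    using f x0 interior_subset unfolding real_analytic_on2_def by blast
  obtain e0 where "0 < e0" and "cball x0 e0 \<subseteq> S"
    using x0 mem_interior_cball by blast
  define e where "e = min r e0 / 4"
  have "0 < e" using \<open>0 < r\<close> \<open>0 < e0\<close> by (simp add: e_def)
  have in_domain: "x \<in> ball x0 r \<inter> S" if "\<bar>fst x - fst x0\<bar> \<le> e" "\<bar>snd x - snd x0\<bar> \<le> e" for x
  proof -
    have "dist x x0 \<le> 2 * e"
      using that dist_le_sum_abs_coords[of x x0] by linarith
    then show ?thesis
      using \<open>cball x0 e0 \<subseteq> S\<close> \<open>0 < r\<close> \<open>0 < e0\<close> by (auto simp: e_def dist_commute)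
  qed
  define b where "b = (\<lambda>(i, j). a i j * e ^ i * e ^ j)"
  have "(b has_sum f (fst x0 + e, snd x0 + e)) UNIV"
    using series[OF in_domain, of "(fst x0 + e, snd x0 + e)"] \<open>0 < e\<close> by (simp add: b_def)
  then have abs_b: "(\<lambda>ij. \<bar>b ij\<bar>) summable_on UNIV"
    using summable_on_iff_abs_summable_on_real has_sum_imp_summable by fastforce
  have "\<bar>f x\<bar> \<le> infsum (\<lambda>ij. \<bar>b ij\<bar>) UNIV" if "x \<in> cball x0 e" for x
  proof (rule abs_has_sum_le_infsum_abs[OF _ abs_b])
    have close: "\<bar>fst x - fst x0\<bar> \<le> e" "\<bar>snd x - snd x0\<bar> \<le> e"
      using that abs_coords_le_dist[of x x0] by (auto simp: dist_commute)
    then show "((\<lambda>(i, j). a i j * (fst x - fst x0) ^ i * (snd x - snd x0) ^ j) has_sum f x) UNIV"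
      using series in_domain by blast
    fix ij :: "nat \<times> nat"
    obtain i j where ij: "ij = (i, j)" by fastforce
    have "\<bar>fst x - fst x0\<bar> ^ i * \<bar>snd x - snd x0\<bar> ^ j \<le> e ^ i * e ^ j"
      using close by (intro mult_mono power_mono) auto
    then show "\<bar>(\<lambda>(i, j). a i j * (fst x - fst x0) ^ i * (snd x - snd x0) ^ j) ij\<bar> \<le> \<bar>b ij\<bar>"
      using \<open>0 < e\<close> by (simp add: b_def ij abs_mult power_abs mult.assoc mult_left_mono)
  qed
  with \<open>0 < e\<close> that show ?thesis by blast
qed

lemma dil_dil: "0 < t \<Longrightarrow> 0 < u \<Longrightarrow> dil a1 a2 u (dil a1 a2 t y) = dil a1 a2 (u * t) y"
  by (simp add: dil_def powr_mult)

lemma V1set_iff: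
  assumes "0 < a1"
  shows "x \<in> V1set a1 a2 c d \<longleftrightarrow>
    0 < fst x \<and> fst x < 1 \<and> c < snd x / fst x powr (a2 / a1) \<and> snd x / fst x powr (a2 / a1) < d"
proof
  assume "x \<in> V1set a1 a2 c d"
  then obtain t s where x: "x = dil a1 a2 t (1, s)" and ts: "0 < t" "t < 1" "c < s" "s < d"
    unfolding V1set_def by blast
  have "fst x powr (a2 / a1) = t powr a2"
    using assms ts by (simp add: x dil_def powr_powr)
  then show "0 < fst x \<and> fst x < 1 \<and> c < snd x / fst x powr (a2 / a1) \<and> snd x / fst x powr (a2 / a1) < d"
    using assms ts by (simp add: x dil_def powr01_less_one)
next
  assume x: "0 < fst x \<and> fst x < 1 \<and> c < snd x / fst x powr (a2 / a1) \<and> snd x / fst x powr (a2 / a1) < d"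
  define t where "t = fst x powr (1 / a1)"
  have "0 < t" "t < 1"
    using assms x by (simp_all add: t_def powr01_less_one)
  moreover have "dil a1 a2 t (1, snd x / fst x powr (a2 / a1)) = x"
    using assms x by (simp add: t_def dil_def powr_powr)
  ultimately show "x \<in> V1set a1 a2 c d"
    unfolding V1set_def using x by (intro CollectI exI[of _ t] exI[of _ "snd x / fst x powr (a2 / a1)"]) auto
qed

lemma open_V1set:
  assumes "0 < a1"
  shows "open (V1set a1 a2 c d)"
proof -
  have "V1set a1 a2 c d = {x. 0 < fst x} \<inter>
      (\<lambda>x. (fst x, snd x / fst x powr (a2 / a1))) -` ({0<..<1} \<times> {c<..<d})"
    using V1set_iff[OF assms] by auto
  moreover have "continuous_on {x. 0 < fst x} (\<lambda>x::real \<times> real. (fst x, snd x / fst x powr (a2 / a1)))"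
    by (intro continuous_intros) auto
  ultimately show ?thesis
    by (auto intro!: continuous_open_preimage open_Collect_less continuous_intros open_Times)
qed

lemma V1set_nonempty: "c < d \<Longrightarrow> dil a1 a2 (1 / 2) (1, (c + d) / 2) \<in> V1set a1 a2 c d"
  unfolding V1set_def by (intro CollectI exI[of _ "1 / 2"] exI[of _ "(c + d) / 2"]) auto

lemma V1set_subset_Vset: "a \<le> c \<Longrightarrow> d \<le> b \<Longrightarrow> V1set a1 a2 c d \<subseteq> Vset a1 a2 a b"
  unfolding V1set_def Vset_def by fastforce

lemma dil_V1set:
  assumes "0 < u" "u \<le> 1" "x \<in> V1set a1 a2 c d"
  shows "dil a1 a2 u x \<in> V1set a1 a2 c d"
proof -
  obtain t s where x: "x = dil a1 a2 t (1, s)" and ts: "0 < t" "t < 1" "c < s" "s < d"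
    using assms(3) unfolding V1set_def by blast
  have "u * t < 1"
    using assms ts mult_le_less_imp_less[of u 1 t 1] by simp
  moreover have "dil a1 a2 u x = dil a1 a2 (u * t) (1, s)"
    using assms ts by (simp add: x dil_dil)
  ultimately show ?thesis
    unfolding V1set_def using assms ts by (intro CollectI exI[of _ "u * t"] exI[of _ s]) auto
qed

lemma graph_bounded_on_cball_in_V1set:
  fixes \<phi> :: "real \<times> real \<Rightarrow> real \<times> real"
  assumes "0 < \<alpha>1"
    and H1: "real_analytic_on2 (\<lambda>x. fst (\<phi> x)) (Vset \<alpha>1 \<alpha>2 a b)"
            "real_analytic_on2 (\<lambda>x. snd (\<phi> x)) (Vset \<alpha>1 \<alpha>2 a b)"
    and "a \<le> c" "c < d" "d \<le> b"
  obtains x0 e M where "0 < e" "cball x0 e \<subseteq> V1set \<alpha>1 \<alpha>2 c d"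
    "\<And>x. x \<in> cball x0 e \<Longrightarrow> norm (x, \<phi> x) \<le> M"
proof -
  define x0 where "x0 = dil \<alpha>1 \<alpha>2 (1 / 2) (1, (c + d) / 2)"
  obtain e0 where "0 < e0" and e0: "cball x0 e0 \<subseteq> V1set \<alpha>1 \<alpha>2 c d"
    using open_V1set[OF \<open>0 < \<alpha>1\<close>] V1set_nonempty[OF \<open>c < d\<close>] open_contains_cball
    unfolding x0_def by blast
  then have "x0 \<in> interior (Vset \<alpha>1 \<alpha>2 a b)"
    using V1set_subset_Vset[OF \<open>a \<le> c\<close> \<open>d \<le> b\<close>] mem_interior_cball by blast
  then obtain e1 M1 e2 M2 where "0 < e1" and M1: "\<And>x. x \<in> cball x0 e1 \<Longrightarrow> \<bar>fst (\<phi> x)\<bar> \<le> M1"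
    and "0 < e2" and M2: "\<And>x. x \<in> cball x0 e2 \<Longrightarrow> \<bar>snd (\<phi> x)\<bar> \<le> M2"
    using real_analytic_on2_locally_bounded[OF H1(1)] real_analytic_on2_locally_bounded[OF H1(2)]
    by metis
  define e where "e = min e0 (min e1 e2)"
  have "norm (x, \<phi> x) \<le> norm x0 + e + M1 + M2" if "x \<in> cball x0 e" for x
  proof -
    have "norm x \<le> norm x0 + e"
      using that norm_triangle_sub[of x x0] by (simp add: dist_norm norm_minus_commute)
    moreover have "\<bar>fst (\<phi> x)\<bar> \<le> M1" "\<bar>snd (\<phi> x)\<bar> \<le> M2"
      using that M1 M2 by (auto simp: e_def)
    then have "norm (\<phi> x) \<le> M1 + M2"
      using norm_Pair_le[of "fst (\<phi> x)" "snd (\<phi> x)"] by simp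
    ultimately show ?thesis
      using norm_Pair_le[of x "\<phi> x"] by linarith
  qed
  moreover have "0 < e" "cball x0 e \<subseteq> V1set \<alpha>1 \<alpha>2 c d"
    using \<open>0 < e0\<close> \<open>0 < e1\<close> \<open>0 < e2\<close> e0 by (auto simp: e_def)
  ultimately show ?thesis
    using that by blast
qed

section \<open>The Knapp example\<close>

text \<open>The Fourier transform of this Gaussian is bounded below by half its integral on a box of
  side lengths comparable to \<open>\<kappa> * \<delta> powr \<alpha>1, \<kappa> * \<delta> powr \<alpha>2, \<kappa> * \<delta> powr m, \<kappa> * \<delta> powr m\<close>;
  by the homogeneity of \<open>\<phi>\<close>, for large \<open>\<kappa>\<close> this box contains the part of the surface lying
  over a \<open>\<delta>\<close>-dilated box.\<close>

definition knapp_test :: "real \<Rightarrow> real \<Rightarrow> real \<Rightarrow> real \<Rightarrow> real \<Rightarrow> R4 \<Rightarrow> complex" where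
  "knapp_test \<alpha>1 \<alpha>2 m \<kappa> \<delta> z = complex_of_real
     (gauss4 (1 / (\<kappa> * \<delta> powr \<alpha>1)) (1 / (\<kappa> * \<delta> powr \<alpha>2)) (1 / (\<kappa> * \<delta> powr m)) (1 / (\<kappa> * \<delta> powr m)) z)"

lemma knapp_test_widths_prod:
  fixes \<alpha>1 \<alpha>2 m \<kappa> \<delta> :: real
  assumes "0 < \<kappa>" "0 < \<delta>"
  shows "1 / (\<kappa> * \<delta> powr \<alpha>1) * (1 / (\<kappa> * \<delta> powr \<alpha>2)) * (1 / (\<kappa> * \<delta> powr m)) * (1 / (\<kappa> * \<delta> powr m))
    = \<delta> powr (- (\<alpha>1 + \<alpha>2 + 2 * m)) / \<kappa> ^ 4"
  using assms by (simp add: powr_minus_divide powr_add[symmetric] field_simps power4_eq_xxxx)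

lemma schwartz_knapp_test: "0 < \<kappa> \<Longrightarrow> 0 < \<delta> \<Longrightarrow> schwartz (knapp_test \<alpha>1 \<alpha>2 m \<kappa> \<delta>)"
  unfolding knapp_test_def[abs_def] by (rule schwartz_gauss4) auto

lemma Lp_norm_knapp_test_le:
  fixes \<alpha>1 \<alpha>2 m :: real
  assumes "1 \<le> p"
  obtains K where "0 < K" "\<And>\<kappa> \<delta>. 0 < \<kappa> \<Longrightarrow> 0 < \<delta> \<Longrightarrow>
    Lp_norm lborel p (knapp_test \<alpha>1 \<alpha>2 m \<kappa> \<delta>)
      \<le> ennreal (K * (\<delta> powr (- (\<alpha>1 + \<alpha>2 + 2 * m)) / \<kappa> ^ 4) powr enn2real (1 / p))"
proof -
  obtain K where "0 < K" and K: "\<And>s1 s2 s3 s4. 0 < s1 \<Longrightarrow> 0 < s2 \<Longrightarrow> 0 < s3 \<Longrightarrow> 0 < s4 \<Longrightarrow>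
    Lp_norm lborel p (\<lambda>z. complex_of_real (gauss4 s1 s2 s3 s4 z))
      \<le> ennreal (K * (s1 * s2 * s3 * s4) powr enn2real (1 / p))"
    using Lp_norm_gauss4_le[OF assms] by blast
  show ?thesis
  proof (rule that[OF \<open>0 < K\<close>])
    fix \<kappa> \<delta> :: real
    assume "0 < \<kappa>" "0 < \<delta>"
    then show "Lp_norm lborel p (knapp_test \<alpha>1 \<alpha>2 m \<kappa> \<delta>)
      \<le> ennreal (K * (\<delta> powr (- (\<alpha>1 + \<alpha>2 + 2 * m)) / \<kappa> ^ 4) powr enn2real (1 / p))"
      using K[of "1 / (\<kappa> * \<delta> powr \<alpha>1)" "1 / (\<kappa> * \<delta> powr \<alpha>2)" "1 / (\<kappa> * \<delta> powr m)" "1 / (\<kappa> * \<delta> powr m)"]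
      unfolding knapp_test_def[abs_def] knapp_test_widths_prod[OF \<open>0 < \<kappa>\<close> \<open>0 < \<delta>\<close>, symmetric]
      by simp
  qed
qed

lemma norm_fourier_knapp_test_ge:
  fixes \<alpha>1 \<alpha>2 m \<kappa> \<delta> :: real
  assumes "0 < \<kappa>" "0 < \<delta>" and "norm (x, \<psi>) \<le> M" "4 * pi * M \<le> \<kappa>"
  shows "(2 * pi)\<^sup>2 / (2 * \<kappa> ^ 4) * \<delta> powr (- (\<alpha>1 + \<alpha>2 + 2 * m))
    \<le> norm (fourier (knapp_test \<alpha>1 \<alpha>2 m \<kappa> \<delta>) (dil \<alpha>1 \<alpha>2 \<delta> x, \<delta> powr m *\<^sub>R \<psi>))"
proof -
  define s1 s2 s3 where "s1 = 1 / (\<kappa> * \<delta> powr \<alpha>1)" and "s2 = 1 / (\<kappa> * \<delta> powr \<alpha>2)"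
    and "s3 = 1 / (\<kappa> * \<delta> powr m)"
  define \<xi> where "\<xi> = (dil \<alpha>1 \<alpha>2 \<delta> x, \<delta> powr m *\<^sub>R \<psi>)"
  define w where "w = norm2_coordwise_mult \<xi> ((s1, s2), (s3, s3))"
  have s: "0 < s1" "0 < s2" "0 < s3"
    using assms by (simp_all add: s1_def s2_def s3_def)
  have "w = (norm (x, \<psi>) / \<kappa>)\<^sup>2"
    using assms
    by (simp add: w_def norm2_coordwise_mult_def \<xi>_def s1_def s2_def s3_def dil_def norm_R4_power2
        power_divide add_divide_distrib)
  also have "\<dots> \<le> (M / \<kappa>)\<^sup>2"
    using assms by (intro power_mono divide_right_mono) auto
  also have "\<dots> \<le> (1 / (4 * pi))\<^sup>2"
    using assms order_trans[OF norm_ge_zero assms(3)] by (intro power_mono) (simp_all add: field_simps)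
  finally have "8 * pi\<^sup>2 * w \<le> 1 / 2"
    by (simp add: power_divide power_mult_distrib field_simps)
  have "(2 * pi)\<^sup>2 / (2 * \<kappa> ^ 4) * \<delta> powr (- (\<alpha>1 + \<alpha>2 + 2 * m)) = (2 * pi)\<^sup>2 * (s1 * s2 * s3 * s3) * (1 / 2)"
    using knapp_test_widths_prod[OF assms(1,2), of \<alpha>1 \<alpha>2 m] by (simp add: s1_def s2_def s3_def)
  also have "\<dots> \<le> (2 * pi)\<^sup>2 * (s1 * s2 * s3 * s3) * (1 - 8 * pi\<^sup>2 * w)"
    using s \<open>8 * pi\<^sup>2 * w \<le> 1 / 2\<close> by (intro mult_left_mono) auto
  also have "\<dots> \<le> Re (fourier (knapp_test \<alpha>1 \<alpha>2 m \<kappa> \<delta>) \<xi>)"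
    using Re_fourier_gauss4_ge[OF s s(3), of \<xi>] by (simp add: knapp_test_def[abs_def] s1_def s2_def s3_def w_def)
  also have "\<dots> \<le> norm (fourier (knapp_test \<alpha>1 \<alpha>2 m \<kappa> \<delta>) \<xi>)"
    by (rule complex_Re_le_cmod)
  finally show ?thesis
    by (simp add: \<xi>_def)
qed

definition dil_box :: "real \<Rightarrow> real \<Rightarrow> real \<Rightarrow> real \<times> real \<Rightarrow> real \<Rightarrow> (real \<times> real) set" where
  "dil_box a1 a2 \<delta> x0 h =
     {\<delta> powr a1 * (fst x0 - h)..\<delta> powr a1 * (fst x0 + h)} \<times> {\<delta> powr a2 * (snd x0 - h)..\<delta> powr a2 * (snd x0 + h)}"

lemma dil_box_in_sets: "dil_box a1 a2 \<delta> x0 h \<in> sets lborel"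
  by (simp add: dil_box_def borel_closed closed_Times)

lemma emeasure_dil_box:
  assumes "0 < \<delta>" "0 \<le> h"
  shows "emeasure lborel (dil_box a1 a2 \<delta> x0 h) = ennreal (\<delta> powr (a1 + a2) * (2 * h)\<^sup>2)"
  using assms
  by (simp add: dil_box_def lborel_prod[symmetric] lborel.emeasure_pair_measure_Times ennreal_mult[symmetric]
      powr_add power2_eq_square algebra_simps)

lemma dil_box_subset_dil_image:
  assumes "0 < \<delta>"
  shows "dil_box a1 a2 \<delta> x0 h \<subseteq> dil a1 a2 \<delta> ` cball x0 (2 * h)"
proof
  fix y assume y: "y \<in> dil_box a1 a2 \<delta> x0 h"
  define x where "x = (fst y / \<delta> powr a1, snd y / \<delta> powr a2)"
  have "x \<in> {fst x0 - h..fst x0 + h} \<times> {snd x0 - h..snd x0 + h}"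
    using y assms by (auto simp: dil_box_def x_def pos_le_divide_eq pos_divide_le_eq mult.commute)
  then have "x \<in> cball x0 (2 * h)"
    using rectangle_subset_cball by blast
  moreover have "y = dil a1 a2 \<delta> x"
    using assms by (simp add: x_def dil_def)
  ultimately show "y \<in> dil a1 a2 \<delta> ` cball x0 (2 * h)" by blast
qed

lemma dil_box_restrict_V1set:
  assumes "0 < \<alpha>1" "0 < \<delta>" "\<delta> \<le> 1" "0 \<le> h" "cball x0 (2 * h) \<subseteq> V1set \<alpha>1 \<alpha>2 c d"
  shows "dil_box \<alpha>1 \<alpha>2 \<delta> x0 h \<in> sets (restrict_space lborel (V1set \<alpha>1 \<alpha>2 c d))"
    and "emeasure (restrict_space lborel (V1set \<alpha>1 \<alpha>2 c d)) (dil_box \<alpha>1 \<alpha>2 \<delta> x0 h)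
      = ennreal (\<delta> powr (\<alpha>1 + \<alpha>2) * (2 * h)\<^sup>2)"
proof -
  have "dil_box \<alpha>1 \<alpha>2 \<delta> x0 h \<subseteq> V1set \<alpha>1 \<alpha>2 c d"
  proof
    fix y assume "y \<in> dil_box \<alpha>1 \<alpha>2 \<delta> x0 h"
    then obtain x where "x \<in> cball x0 (2 * h)" "y = dil \<alpha>1 \<alpha>2 \<delta> x"
      using dil_box_subset_dil_image[OF assms(2)] by blast
    then show "y \<in> V1set \<alpha>1 \<alpha>2 c d"
      using assms(5) dil_V1set[OF assms(2,3)] by blast
  qed
  moreover have "V1set \<alpha>1 \<alpha>2 c d \<in> sets lborel"
    using open_V1set[OF assms(1)] by (simp add: borel_open)
  ultimately show "dil_box \<alpha>1 \<alpha>2 \<delta> x0 h \<in> sets (restrict_space lborel (V1set \<alpha>1 \<alpha>2 c d))"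
    and "emeasure (restrict_space lborel (V1set \<alpha>1 \<alpha>2 c d)) (dil_box \<alpha>1 \<alpha>2 \<delta> x0 h)
      = ennreal (\<delta> powr (\<alpha>1 + \<alpha>2) * (2 * h)\<^sup>2)"
    using dil_box_in_sets emeasure_dil_box[OF assms(2,4)]
    by (simp_all add: sets_restrict_space_iff emeasure_restrict_space)
qed

lemma Lp_norm_fourier_restriction_knapp_test_ge:
  fixes \<alpha>1 \<alpha>2 m a b c d :: real and \<phi> :: "real \<times> real \<Rightarrow> real \<times> real"
  assumes "0 < \<alpha>1" "0 < \<alpha>2"
    and H1: "real_analytic_on2 (\<lambda>x. fst (\<phi> x)) (Vset \<alpha>1 \<alpha>2 a b)"
            "real_analytic_on2 (\<lambda>x. snd (\<phi> x)) (Vset \<alpha>1 \<alpha>2 a b)"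
    and H2: "\<forall>x\<in>Vset \<alpha>1 \<alpha>2 a b. \<forall>t>0. \<phi> (dil \<alpha>1 \<alpha>2 t x) = t powr m *\<^sub>R \<phi> x"
    and "a \<le> c" "c < d" "d \<le> b" and "1 \<le> q"
  obtains \<kappa> c0 r where "0 < \<kappa>" "0 < c0" "0 < r"
    "\<And>\<delta>. 0 < \<delta> \<Longrightarrow> \<delta> < 1 \<Longrightarrow>
      ennreal (c0 * \<delta> powr (- (\<alpha>1 + \<alpha>2 + 2 * m)) * (\<delta> powr (\<alpha>1 + \<alpha>2) * r) powr enn2real (1 / q))
      \<le> Lp_norm (restrict_space lborel (V1set \<alpha>1 \<alpha>2 c d)) q (\<lambda>x. fourier (knapp_test \<alpha>1 \<alpha>2 m \<kappa> \<delta>) (x, \<phi> x))"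
proof -
  obtain e x0 M where "0 < e" and ball_V1: "cball x0 e \<subseteq> V1set \<alpha>1 \<alpha>2 c d"
    and M: "\<And>x. x \<in> cball x0 e \<Longrightarrow> norm (x, \<phi> x) \<le> M"
    using graph_bounded_on_cball_in_V1set[OF \<open>0 < \<alpha>1\<close> H1 \<open>a \<le> c\<close> \<open>c < d\<close> \<open>d \<le> b\<close>] by metis
  define \<kappa> where "\<kappa> = 4 * pi * (\<bar>M\<bar> + 1)"
  define c0 where "c0 = (2 * pi)\<^sup>2 / (2 * \<kappa> ^ 4)"
  have "0 < \<kappa>" "0 < c0" "0 < e\<^sup>2"
    using \<open>0 < e\<close> by (simp_all add: \<kappa>_def c0_def add_nonneg_pos)
  moreover have "ennreal (c0 * \<delta> powr (- (\<alpha>1 + \<alpha>2 + 2 * m)) * (\<delta> powr (\<alpha>1 + \<alpha>2) * e\<^sup>2) powr enn2real (1 / q))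
      \<le> Lp_norm (restrict_space lborel (V1set \<alpha>1 \<alpha>2 c d)) q (\<lambda>x. fourier (knapp_test \<alpha>1 \<alpha>2 m \<kappa> \<delta>) (x, \<phi> x))"
    if "0 < \<delta>" "\<delta> < 1" for \<delta>
  proof -
    define R where "R = dil_box \<alpha>1 \<alpha>2 \<delta> x0 (e / 2)"
    have dil_R: "y \<in> R \<Longrightarrow> \<exists>x\<in>cball x0 e. y = dil \<alpha>1 \<alpha>2 \<delta> x" for y
      using dil_box_subset_dil_image[OF \<open>0 < \<delta>\<close>, of \<alpha>1 \<alpha>2 x0 "e / 2"] by (auto simp: R_def)
    have "0 \<le> e / 2" "cball x0 (2 * (e / 2)) \<subseteq> V1set \<alpha>1 \<alpha>2 c d"
      using \<open>0 < e\<close> ball_V1 by simp_all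
    note R = dil_box_restrict_V1set[OF \<open>0 < \<alpha>1\<close> \<open>0 < \<delta>\<close> less_imp_le[OF \<open>\<delta> < 1\<close>] this, folded R_def]
    have R_measure: "emeasure (restrict_space lborel (V1set \<alpha>1 \<alpha>2 c d)) R = ennreal (\<delta> powr (\<alpha>1 + \<alpha>2) * e\<^sup>2)"
      using R(2) by simp
    moreover have "c0 * \<delta> powr (- (\<alpha>1 + \<alpha>2 + 2 * m)) \<le> norm (fourier (knapp_test \<alpha>1 \<alpha>2 m \<kappa> \<delta>) (y, \<phi> y))"
      if "y \<in> R" for y
    proof -
      obtain x where x: "x \<in> cball x0 e" and y: "y = dil \<alpha>1 \<alpha>2 \<delta> x"
        using dil_R[OF \<open>y \<in> R\<close>] by blast
      have "\<phi> y = \<delta> powr m *\<^sub>R \<phi> x"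
        using H2 x ball_V1 V1set_subset_Vset[OF \<open>a \<le> c\<close> \<open>d \<le> b\<close>] \<open>0 < \<delta>\<close> y by blast
      moreover have "norm (x, \<phi> x) \<le> \<bar>M\<bar>"
        using M[OF x] by linarith
      ultimately show ?thesis
        using norm_fourier_knapp_test_ge[OF \<open>0 < \<kappa>\<close> \<open>0 < \<delta>\<close>, of x "\<phi> x" "\<bar>M\<bar>" \<alpha>1 \<alpha>2 m]
        by (simp add: y c0_def \<kappa>_def)
    qed
    ultimately show ?thesis
      using \<open>0 < e\<close> \<open>0 < c0\<close> \<open>0 < \<delta>\<close>
      by (intro Lp_norm_ge_inverse_exponent[OF R(1) R_measure _ \<open>1 \<le> q\<close>]) auto
  qed
  ultimately show ?thesis
    using that by blast
qed

section \<open>Comparing the exponents\<close>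

lemma exponent_le_of_powr_bound:
  fixes e1 e2 c C :: real
  assumes "0 < c" and bound: "\<And>\<delta>. 0 < \<delta> \<Longrightarrow> \<delta> < 1 \<Longrightarrow> c * \<delta> powr e1 \<le> C * \<delta> powr e2"
  shows "e2 \<le> e1"
proof (rule ccontr)
  assume "\<not> e2 \<le> e1"
  then have e: "e1 - e2 < 0" by simp
  define B where "B = \<bar>C\<bar> / c + 1"
  have "0 < B" using \<open>0 < c\<close> by (simp add: B_def add_nonneg_pos)
  define \<delta> where "\<delta> = min (1 / 2) (B powr (1 / (e1 - e2)))"
  have \<delta>: "0 < \<delta>" "\<delta> < 1"
    using \<open>0 < B\<close> by (auto simp: \<delta>_def)
  have "B = (B powr (1 / (e1 - e2))) powr (e1 - e2)"
    using e \<open>0 < B\<close> by (simp add: powr_powr)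
  also have "\<dots> \<le> \<delta> powr (e1 - e2)"
    using e \<delta> by (intro powr_mono2') (auto simp: \<delta>_def)
  also have "\<delta> powr (e1 - e2) \<le> \<bar>C\<bar> / c"
  proof -
    have "c * \<delta> powr e1 \<le> C * \<delta> powr e2"
      using bound \<delta> by blast
    then have "\<delta> powr (e1 - e2) \<le> C / c"
      using \<open>0 < c\<close> \<delta> by (simp add: powr_diff pos_le_divide_eq pos_divide_le_eq mult.commute)
    then show ?thesis
      using \<open>0 < c\<close> by (smt (verit) divide_right_mono abs_ge_self)
  qed
  finally show False
    by (simp add: B_def)
qed

lemma scaling_exponents_le:
  fixes S A pinv qinv c0 r C K k :: real
  assumes "0 < c0" "0 < r" "0 < C" "0 < K" "0 < k"
    and bound: "\<And>\<delta>. 0 < \<delta> \<Longrightarrow> \<delta> < 1 \<Longrightarrow>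
      ennreal (c0 * \<delta> powr (- S) * (\<delta> powr A * r) powr qinv)
      \<le> ennreal C * ennreal (K * (\<delta> powr (- S) / k) powr pinv)"
  shows "S * (1 - pinv) \<le> A * qinv"
proof -
  have bound': "c0 * r powr qinv * \<delta> powr (- S + A * qinv) \<le> C * K / k powr pinv * \<delta> powr (- S * pinv)"
    if "0 < \<delta>" "\<delta> < 1" for \<delta>
  proof -
    have "c0 * r powr qinv * \<delta> powr (- S + A * qinv) = c0 * \<delta> powr (- S) * (\<delta> powr A * r) powr qinv"
      using that assms by (simp add: powr_mult powr_powr powr_add[symmetric])
    also have "\<dots> \<le> C * (K * (\<delta> powr (- S) / k) powr pinv)"
      using bound[OF that] assms by (simp add: ennreal_mult[symmetric])
    also have "\<dots> = C * K / k powr pinv * \<delta> powr (- S * pinv)"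
      using that assms by (simp add: powr_divide powr_powr)
    finally show ?thesis .
  qed
  have "- S * pinv \<le> - S + A * qinv"
    using assms by (intro exponent_le_of_powr_bound[where c = "c0 * r powr qinv", OF _ bound']) auto
  then show ?thesis
    by (simp add: algebra_simps)
qed

lemma ennreal_enn2real_inverse:
  assumes "1 \<le> p"
  shows "1 / p = ennreal (enn2real (1 / p))" "enn2real (1 / p) \<le> 1"
proof -
  have "1 / p \<le> 1"
    using assms by (intro divide_le_posI_ennreal) (auto intro: less_le_trans[OF zero_less_one])
  then show "1 / p = ennreal (enn2real (1 / p))" "enn2real (1 / p) \<le> 1"
    using enn2real_mono[of "1 / p" 1] by (auto simp: ennreal_enn2real_if top_unique)
qed

lemma ennreal_inverse_exponents_le:
  fixes p q :: ennreal and S A :: real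
  assumes pq: "1 \<le> p" "1 \<le> q" and "0 < A" "0 \<le> S"
    and le: "S * (1 - enn2real (1 / p)) \<le> A * enn2real (1 / q)"
  shows "ennreal (S / A) * (1 - 1 / p) \<le> 1 / q"
proof -
  define pinv qinv where "pinv = enn2real (1 / p)" and "qinv = enn2real (1 / q)"
  have "0 \<le> pinv" "pinv \<le> 1" "1 / p = ennreal pinv" "1 / q = ennreal qinv"
    using ennreal_enn2real_inverse[OF pq(1)] ennreal_enn2real_inverse[OF pq(2)] by (simp_all add: pinv_def qinv_def)
  then have "1 - 1 / p = ennreal (1 - pinv)"
    using ennreal_minus[of pinv 1] by simp
  then have "ennreal (S / A) * (1 - 1 / p) = ennreal (S / A * (1 - pinv))"
    using \<open>pinv \<le> 1\<close> \<open>0 < A\<close> \<open>0 \<le> S\<close> by (simp add: ennreal_mult[symmetric])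
  also have "\<dots> \<le> 1 / q"
    using le[folded pinv_def qinv_def] \<open>1 / q = ennreal qinv\<close> \<open>0 < A\<close> by (simp add: ennreal_leI field_simps)
  finally show ?thesis .
qed

theorem lemma4p1:
  fixes \<alpha>1 \<alpha>2 m a b c d \<sigma> :: real
    and \<phi> :: "real \<times> real \<Rightarrow> real \<times> real"
    and p q :: ennreal
  assumes alpha_pos: "\<alpha>1 > 0" "\<alpha>2 > 0" and alpha_ne: "\<alpha>1 \<noteq> \<alpha>2"
    and H1: "real_analytic_on2 (\<lambda>x. fst (\<phi> x)) (Vset \<alpha>1 \<alpha>2 a b)"
            "real_analytic_on2 (\<lambda>x. snd (\<phi> x)) (Vset \<alpha>1 \<alpha>2 a b)"
    and H2: "m \<ge> 3 * (\<alpha>1 + \<alpha>2)"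
            "\<forall>x\<in>Vset \<alpha>1 \<alpha>2 a b. \<forall>t>0. \<phi> (dil \<alpha>1 \<alpha>2 t x) = t powr m *\<^sub>R \<phi> x"
    and H3: "a < c" "c < d" "d < b" "c \<le> \<sigma>" "\<sigma> \<le> d"
            "{x \<in> closure (Vset \<alpha>1 \<alpha>2 c d) - {(0, 0)}. \<not> elliptic \<phi> x}
               = {dil \<alpha>1 \<alpha>2 t (1, \<sigma>) | t. t > 0}"
    and H4: "\<exists>n1 n2 :: nat. \<exists>D \<delta> :: real. n1 > 0 \<and> n2 > 0 \<and> D > 0 \<and> \<delta> > 0 \<and>
               (c < \<sigma> \<longrightarrow> (\<forall>s t. \<sigma> - \<delta> < s \<and> s < \<sigma> \<and> t > 0 \<longrightarrow>
                   minQ \<phi> (dil \<alpha>1 \<alpha>2 t (1, s))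
                     \<ge> D * t powr (2 * (m - \<alpha>1 - \<alpha>2)) * \<bar>s - \<sigma>\<bar> ^ n1)) \<and>
               (\<sigma> < d \<longrightarrow> (\<forall>s t. \<sigma> < s \<and> s < \<sigma> + \<delta> \<and> t > 0 \<longrightarrow>
                   minQ \<phi> (dil \<alpha>1 \<alpha>2 t (1, s))
                     \<ge> D * t powr (2 * (m - \<alpha>1 - \<alpha>2)) * \<bar>s - \<sigma>\<bar> ^ n2)) \<and>
               real (max n1 n2) < 2 * m / (\<alpha>1 + \<alpha>2) - 3"
    and pq: "1 \<le> p" "1 \<le> q"
    and restr: "\<exists>C>0. \<forall>f. schwartz f \<longrightarrow>
        Lp_norm (restrict_space lborel (V1set \<alpha>1 \<alpha>2 c d)) q (\<lambda>x. fourier f (x, \<phi> x))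
          \<le> ennreal C * Lp_norm lborel p f"
  shows "1 / q \<ge> ennreal ((\<alpha>1 + \<alpha>2 + 2 * m) / (\<alpha>1 + \<alpha>2)) * (1 - 1 / p)"
proof -
  \<comment> \<open>Only the homogeneity and the local boundedness of \<open>\<phi>\<close> enter.\<close>
  obtain C where "0 < C" and C: "\<And>f. schwartz f \<Longrightarrow>
      Lp_norm (restrict_space lborel (V1set \<alpha>1 \<alpha>2 c d)) q (\<lambda>x. fourier f (x, \<phi> x)) \<le> ennreal C * Lp_norm lborel p f"
    using restr by blast
  obtain \<kappa> c0 r where "0 < \<kappa>" "0 < c0" "0 < r" and lower: "\<And>\<delta>. 0 < \<delta> \<Longrightarrow> \<delta> < 1 \<Longrightarrow>
      ennreal (c0 * \<delta> powr (- (\<alpha>1 + \<alpha>2 + 2 * m)) * (\<delta> powr (\<alpha>1 + \<alpha>2) * r) powr enn2real (1 / q))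
      \<le> Lp_norm (restrict_space lborel (V1set \<alpha>1 \<alpha>2 c d)) q (\<lambda>x. fourier (knapp_test \<alpha>1 \<alpha>2 m \<kappa> \<delta>) (x, \<phi> x))"
    by (rule Lp_norm_fourier_restriction_knapp_test_ge[OF alpha_pos H1 H2(2) less_imp_le[OF H3(1)] H3(2)
          less_imp_le[OF H3(3)] pq(2)]) blast
  obtain K where "0 < K" and upper: "\<And>\<kappa> \<delta>. 0 < \<kappa> \<Longrightarrow> 0 < \<delta> \<Longrightarrow>
      Lp_norm lborel p (knapp_test \<alpha>1 \<alpha>2 m \<kappa> \<delta>)
      \<le> ennreal (K * (\<delta> powr (- (\<alpha>1 + \<alpha>2 + 2 * m)) / \<kappa> ^ 4) powr enn2real (1 / p))"
    by (rule Lp_norm_knapp_test_le[OF pq(1)]) blast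
  have "(\<alpha>1 + \<alpha>2 + 2 * m) * (1 - enn2real (1 / p)) \<le> (\<alpha>1 + \<alpha>2) * enn2real (1 / q)"
  proof (rule scaling_exponents_le[OF \<open>0 < c0\<close> \<open>0 < r\<close> \<open>0 < C\<close> \<open>0 < K\<close>])
    fix \<delta> :: real assume "0 < \<delta>" "\<delta> < 1"
    note lower[OF this]
    also have "Lp_norm (restrict_space lborel (V1set \<alpha>1 \<alpha>2 c d)) q (\<lambda>x. fourier (knapp_test \<alpha>1 \<alpha>2 m \<kappa> \<delta>) (x, \<phi> x))
        \<le> ennreal C * Lp_norm lborel p (knapp_test \<alpha>1 \<alpha>2 m \<kappa> \<delta>)"
      using C schwartz_knapp_test \<open>0 < \<kappa>\<close> \<open>0 < \<delta>\<close> by blast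
    also have "\<dots> \<le> ennreal C * ennreal (K * (\<delta> powr (- (\<alpha>1 + \<alpha>2 + 2 * m)) / \<kappa> ^ 4) powr enn2real (1 / p))"
      using upper \<open>0 < \<kappa>\<close> \<open>0 < \<delta>\<close> by (intro mult_left_mono) auto
    finally show "ennreal (c0 * \<delta> powr (- (\<alpha>1 + \<alpha>2 + 2 * m)) * (\<delta> powr (\<alpha>1 + \<alpha>2) * r) powr enn2real (1 / q))
      \<le> ennreal C * ennreal (K * (\<delta> powr (- (\<alpha>1 + \<alpha>2 + 2 * m)) / \<kappa> ^ 4) powr enn2real (1 / p))" .
  qed (use \<open>0 < \<kappa>\<close> in simp)
  then show ?thesis
    using alpha_pos H2(1) by (intro ennreal_inverse_exponents_le[OF pq]) auto
qed

end
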